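(* Suppose $\mathcal G$ has a spanning tree and let $\beta>0$. Consider system (S) where each agent $i$ determines its triggering times by the following self-triggered procedure, given $t^i_1=0,\dots,t^i_k$: (1) At time $s=t^i_k$, agent $i$ predicts its own state as $x_i(t)=x_i(t^i_k)+(t-t^i_k)q_i(t^i_k)$ and the state of each in-neighbour $v_p$ as $x_p(t)=x_p(t^p_{k_p(s)})+(t-t^p_{k_p(s)})q_p(t^p_{k_p(s)})$ for $t\ge s$, substitutes these into $q_i(t)=-\sum_jL_{ij}x_j(t)$, and computes $$\tau^i_{k+1}=\max\Big\{\tau\ge s:\ |q_i(t^i_k)-q_i(t)|\le e^{-\beta t}\ \ \forall t\in[s,\tau]\Big\}.$$ (2) If some in-neighbour of $v_i$ triggers at a time $t_0\in(s,\tau^i_{k+1})$ (and sends its triggering time, state and control value to $v_i$), then set $s=t_0$ and return to step (1). (3) If no in-neighbour of $v_i$ triggers during $(s,\tau^i_{k+1})$, then $v_i$ triggers at $t^i_{k+1}=\tau^i_{k+1}$, updating its control value and sending $t^i_{k+1}$, $x_i(t^i_{k+1})$, $q_i(t^i_{k+1})$ to all its out-neighbours. Then system (S) reaches consensus exponentially and Zeno behaviour is excluded (each agent has only finitely many triggering times in any bounded interval).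
   Context: Let $\mathcal G$ be a weighted directed graph on agents $v_1,\dots,v_m$ with weighted adjacency matrix $\mathcal A=(a_{ij})$, $a_{ij}\ge0$, $a_{ii}=0$, where $a_{ij}>0$ iff there is a link from $v_j$ to $v_i$ ($v_j$ is an in-neighbour of $v_i$ and $v_i$ an out-neighbour of $v_j$). Let $D=\mathrm{diag}(\sum_j a_{1j},\dots,\sum_j a_{mj})$ and $L=D-\mathcal A$. $\mathcal G$ has a spanning tree if some agent has a directed path to every other agent. System (S): $\dot x_i(t)=-\sum_{j=1}^m L_{ij}x_j(t^i_{k_i(t)})$, $i=1,\dots,m$, where $0=t^i_1<t^i_2<\cdots$ are agent $i$'s triggering times and $k_i(t)=\max\{k:t^i_k\le t\}$; thus $\dot x_i(t)=q_i(t^i_{k_i(t)})$ with $q_i(t)=-\sum_jL_{ij}x_j(t)$. Exponential consensus means there exist $C,\varepsilon>0$ with $|x_i(t)-x_j(t)|\le Ce^{-\varepsilon t}$ for all $i,j$, $t\ge0$. *)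

theory Defs
  imports Complex_Main "HOL-Library.Extended_Real"
begin

text \<open>Agents are indexed by 0,...,m-1.  w i j is the weight a_ij (link from v_j to v_i).\<close>

definition edge :: "nat \<Rightarrow> (nat \<Rightarrow> nat \<Rightarrow> real) \<Rightarrow> nat \<Rightarrow> nat \<Rightarrow> bool" where
  "edge m w j i \<longleftrightarrow> j < m \<and> i < m \<and> w i j > 0"

definition has_spanning_tree :: "nat \<Rightarrow> (nat \<Rightarrow> nat \<Rightarrow> real) \<Rightarrow> bool" where
  "has_spanning_tree m w \<longleftrightarrow> (\<exists>r<m. \<forall>i<m. (edge m w)\<^sup>*\<^sup>* r i)"

definition lap :: "nat \<Rightarrow> (nat \<Rightarrow> nat \<Rightarrow> real) \<Rightarrow> nat \<Rightarrow> nat \<Rightarrow> real" where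
  "lap m w i j = (if i = j then (\<Sum>k<m. w i k) else 0) - w i j"

definition ctrl :: "nat \<Rightarrow> (nat \<Rightarrow> nat \<Rightarrow> real) \<Rightarrow> (nat \<Rightarrow> real \<Rightarrow> real) \<Rightarrow> nat \<Rightarrow> real \<Rightarrow> real" where
  "ctrl m w x i t = - (\<Sum>j<m. lap m w i j * x j t)"

text \<open>Triggering times of agent i: tt i k for enat k < K i (K i = \<infinity> means infinitely many);
  the paper's t^i_{k+1} is tt i k.\<close>
definition last_trig :: "(nat \<Rightarrow> enat) \<Rightarrow> (nat \<Rightarrow> nat \<Rightarrow> real) \<Rightarrow> nat \<Rightarrow> real \<Rightarrow> real" where
  "last_trig K tt j s = Sup {tt j k | k. enat k < K j \<and> tt j k \<le> s}"

definition system_S :: "nat \<Rightarrow> (nat \<Rightarrow> nat \<Rightarrow> real) \<Rightarrow> (nat \<Rightarrow> real \<Rightarrow> real)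
    \<Rightarrow> (nat \<Rightarrow> enat) \<Rightarrow> (nat \<Rightarrow> nat \<Rightarrow> real) \<Rightarrow> bool" where
  "system_S m w x K tt \<longleftrightarrow>
     (\<forall>i<m. continuous_on {0..} (x i) \<and>
        (\<forall>s\<ge>0. (x i has_real_derivative ctrl m w x i (last_trig K tt i s)) (at_right s)))"

definition next_trig :: "(nat \<Rightarrow> enat) \<Rightarrow> (nat \<Rightarrow> nat \<Rightarrow> real) \<Rightarrow> nat \<Rightarrow> nat \<Rightarrow> ereal" where
  "next_trig K tt i k = (if enat (Suc k) < K i then ereal (tt i (Suc k)) else \<infinity>)"

text \<open>Current restart point s of agent i (whose last trigger is tk) just before time u:
  the latest in-neighbour triggering time in (tk, u), or tk if there is none.\<close>
definition restart :: "nat \<Rightarrow> (nat \<Rightarrow> nat \<Rightarrow> real) \<Rightarrow> (nat \<Rightarrow> enat) \<Rightarrow> (nat \<Rightarrow> nat \<Rightarrow> real)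
    \<Rightarrow> nat \<Rightarrow> real \<Rightarrow> real \<Rightarrow> real" where
  "restart m w K tt i tk u =
     Sup ({tk} \<union> {tt p l | p l. p < m \<and> w i p > 0 \<and> enat l < K p \<and> tk < tt p l \<and> tt p l < u})"

definition qpred :: "nat \<Rightarrow> (nat \<Rightarrow> nat \<Rightarrow> real) \<Rightarrow> (nat \<Rightarrow> real \<Rightarrow> real) \<Rightarrow> (nat \<Rightarrow> enat)
    \<Rightarrow> (nat \<Rightarrow> nat \<Rightarrow> real) \<Rightarrow> nat \<Rightarrow> real \<Rightarrow> real \<Rightarrow> real \<Rightarrow> real" where
  "qpred m w x K tt i tk s u =
     - (lap m w i i * (x i tk + (u - tk) * ctrl m w x i tk)
        + (\<Sum>j\<in>{..<m} - {i}. lap m w i j *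
             (x j (last_trig K tt j s) + (u - last_trig K tt j s) * ctrl m w x j (last_trig K tt j s))))"

definition tau_pred :: "real \<Rightarrow> nat \<Rightarrow> (nat \<Rightarrow> nat \<Rightarrow> real) \<Rightarrow> (nat \<Rightarrow> real \<Rightarrow> real) \<Rightarrow> (nat \<Rightarrow> enat)
    \<Rightarrow> (nat \<Rightarrow> nat \<Rightarrow> real) \<Rightarrow> nat \<Rightarrow> real \<Rightarrow> real \<Rightarrow> ereal" where
  "tau_pred \<beta> m w x K tt i tk s =
     Sup {ereal \<tau> | \<tau>. s \<le> \<tau> \<and>
           (\<forall>u\<in>{s..\<tau>}. \<bar>ctrl m w x i tk - qpred m w x K tt i tk s u\<bar> \<le> exp (- \<beta> * u))}"

text \<open>The triggering times are generated by the self-triggered procedure (1)-(3):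
  between two consecutive triggers tk < t_{k+1} of agent i, at every time u the
  current prediction (made at the latest restart) has not yet expired (step 2), and
  t_{k+1} equals the tau computed at the last restart (step 3); if there is no next
  trigger, the prediction never expires.\<close>
definition self_triggered :: "real \<Rightarrow> nat \<Rightarrow> (nat \<Rightarrow> nat \<Rightarrow> real) \<Rightarrow> (nat \<Rightarrow> real \<Rightarrow> real)
    \<Rightarrow> (nat \<Rightarrow> enat) \<Rightarrow> (nat \<Rightarrow> nat \<Rightarrow> real) \<Rightarrow> bool" where
  "self_triggered \<beta> m w x K tt \<longleftrightarrow>
     (\<forall>i<m. tt i 0 = 0 \<and> enat 0 < K i \<and>
        (\<forall>k. enat (Suc k) < K i \<longrightarrow> tt i k < tt i (Suc k)) \<and>
        (\<forall>k. enat k < K i \<longrightarrow>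
           (\<forall>u. tt i k < u \<and> ereal u < next_trig K tt i k \<longrightarrow>
               ereal u < tau_pred \<beta> m w x K tt i (tt i k) (restart m w K tt i (tt i k) u)) \<and>
           (enat (Suc k) < K i \<longrightarrow>
               tau_pred \<beta> m w x K tt i (tt i k) (restart m w K tt i (tt i k) (tt i (Suc k)))
                 = ereal (tt i (Suc k)))))"

end

theory Submission
  imports Defs "HOL-Analysis.Analysis"
begin

text \<open>The triggering rule keeps the control error of every agent below e^{-\<beta>t}, so the
  states solve the consensus dynamics dx_i/dt = \<Sum>_j a_ij (x_j - x_i) up to a perturbation
  whose total effect after time t is at most e^{-\<beta>t}/\<beta>. Comparison arguments for right
  derivatives then show that the range of the states can grow only by this amount, and that
  once the root of a spanning tree lies in the lower half of the range, this advantage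
  spreads along the tree: within a fixed round time every agent drops below the top by a
  fixed fraction of the range. Hence the range contracts geometrically up to exponentially
  small errors. Zeno behaviour is excluded because a prediction can only expire once the
  control has drifted by about e^{-\<beta>t}, and on bounded time intervals the control is
  Lipschitz, so consecutive triggers are uniformly separated there.\<close>

section \<open>Comparison principles for right derivatives\<close>

lemma continuous_nonpos_at_right_end:
  fixes g :: "real \<Rightarrow> real"
  assumes cont: "continuous_on {a..b} g" and c: "a \<le> c" "c \<le> b"
    and start: "g a \<le> 0" and before: "\<And>s. s \<in> {a..<c} \<Longrightarrow> g s \<le> 0"
  shows "g c \<le> 0"
proof (cases "c = a")
  case False
  then have "closure {a..<c} = {a..c}" using c by simp
  moreover have "continuous_on {a..c} g" using cont by (rule continuous_on_subset) (use c in auto)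
  ultimately show ?thesis using before continuous_le_on_closure[of "{a..<c}" g c 0] c by auto
qed (use start in simp)

lemma eventually_nonpos_at_right:
  fixes g :: "real \<Rightarrow> real"
  assumes cont: "continuous_on {a..b} g" and c: "a \<le> c" "c < b" and nonpos: "g c \<le> 0"
    and deriv: "g c = 0 \<Longrightarrow> \<exists>d<0. (g has_real_derivative d) (at_right c)"
  shows "eventually (\<lambda>s. g s \<le> 0) (at_right c)"
proof (cases "g c < 0")
  case True
  have "(g \<longlongrightarrow> g c) (at c within {a..b})" using cont c by (simp add: continuous_on_def)
  then have "(g \<longlongrightarrow> g c) (at c within {c..b})"
    by (rule tendsto_within_subset) (use c in auto)
  then have "(g \<longlongrightarrow> g c) (at_right c)" using at_within_Icc_at_right[OF c(2)] by simp
  with True have "eventually (\<lambda>s. g s < 0) (at_right c)" by (intro order_tendstoD) auto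
  then show ?thesis by (auto elim: eventually_mono)
next
  case False
  with nonpos have g0: "g c = 0" by simp
  then obtain d where "d < 0" "(g has_real_derivative d) (at_right c)" using deriv by blast
  then have "eventually (\<lambda>y. (g y - g c) / (y - c) < 0) (at_right c)"
    by (intro order_tendstoD) (auto simp: has_field_derivative_iff)
  moreover have "eventually (\<lambda>y. y > c) (at_right c)" by (rule eventually_at_right_less)
  ultimately show ?thesis by eventually_elim (use g0 in \<open>auto simp: divide_less_0_iff\<close>)
qed

text \<open>There is no first time at which some g i becomes positive: at such a time all g j
  would still be nonpositive, and those vanishing there would decrease to the right.\<close>

lemma right_deriv_barrier:
  fixes g :: "'i \<Rightarrow> real \<Rightarrow> real"
  assumes fin: "finite I" and cont: "\<And>i. i \<in> I \<Longrightarrow> continuous_on {a..b} (g i)"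
    and start: "\<And>i. i \<in> I \<Longrightarrow> g i a \<le> 0"
    and step: "\<And>t i. t \<in> {a..<b} \<Longrightarrow> i \<in> I \<Longrightarrow> \<forall>j\<in>I. g j t \<le> 0 \<Longrightarrow> g i t = 0
        \<Longrightarrow> \<exists>d<0. (g i has_real_derivative d) (at_right t)"
    and t: "t \<in> {a..b}" and i: "i \<in> I"
  shows "g i t \<le> 0"
proof (rule ccontr)
  assume "\<not> g i t \<le> 0"
  define S where "S = {s \<in> {a..b}. \<exists>j\<in>I. g j s > 0}"
  have tS: "t \<in> S" using \<open>\<not> g i t \<le> 0\<close> t i by (force simp: S_def)
  have bdd: "bdd_below S" unfolding S_def by (rule bdd_belowI[of _ a]) auto
  define c where "c = Inf S"
  have ct: "c \<le> t" unfolding c_def using tS bdd by (rule cInf_lower)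
  have ac: "a \<le> c" unfolding c_def using tS by (intro cInf_greatest) (auto simp: S_def)
  have before_c: "g j s \<le> 0" if "j \<in> I" "s \<in> {a..<c}" for j s
  proof (rule ccontr)
    assume "\<not> g j s \<le> 0"
    then have "s \<in> S" using that ct t by (force simp: S_def)
    then have "c \<le> s" unfolding c_def using bdd by (rule cInf_lower)
    then show False using that by simp
  qed
  have at_c: "g j c \<le> 0" if j: "j \<in> I" for j
    using continuous_nonpos_at_right_end[OF cont[OF j] ac _ start[OF j] before_c[OF j]] ct t by simp
  have cb: "c < b"
  proof (rule ccontr)
    assume "\<not> c < b"
    then have "c = t" using ct t by auto
    moreover obtain j where "j \<in> I" "g j t > 0" using tS by (auto simp: S_def)
    ultimately show False using at_c by force
  qed
  have "eventually (\<lambda>s. g j s \<le> 0) (at_right c)" if j: "j \<in> I" for j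
    using step[of c j] ac cb at_c j by (intro eventually_nonpos_at_right[OF cont[OF j] ac cb]) auto
  then have "eventually (\<lambda>s. \<forall>j\<in>I. g j s \<le> 0) (at_right c)"
    using fin by (simp add: eventually_ball_finite)
  then obtain b' where b': "b' > c" "\<And>s. c < s \<Longrightarrow> s < b' \<Longrightarrow> \<forall>j\<in>I. g j s \<le> 0"
    by (auto simp: eventually_at_right_field)
  have "Inf S < b'" using b' c_def by simp
  then obtain s where s: "s \<in> S" "s < b'" using cInf_less_iff[OF _ bdd] tS by blast
  have "c \<le> s" unfolding c_def using s(1) bdd by (rule cInf_lower)
  moreover have "s \<noteq> c" using s(1) at_c by (fastforce simp: S_def)
  ultimately have "\<forall>j\<in>I. g j s \<le> 0" using b' s by auto
  then show False using s(1) by (auto simp: S_def)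
qed

lemma right_deriv_barrier_nonstrict:
  fixes g :: "'i \<Rightarrow> real \<Rightarrow> real"
  assumes fin: "finite I" and ab: "a \<le> b" and cont: "\<And>i. i \<in> I \<Longrightarrow> continuous_on {a..b} (g i)"
    and start: "\<And>i. i \<in> I \<Longrightarrow> g i a \<le> 0"
    and step: "\<And>t i \<delta>. t \<in> {a..<b} \<Longrightarrow> i \<in> I \<Longrightarrow> \<delta> \<ge> 0 \<Longrightarrow> \<forall>j\<in>I. g j t \<le> \<delta> \<Longrightarrow>
        g i t = \<delta> \<Longrightarrow> \<exists>d\<le>0. (g i has_real_derivative d) (at_right t)"
    and t: "t \<in> {a..b}" and i: "i \<in> I"
  shows "g i t \<le> 0"
proof (rule field_le_epsilon)
  fix e :: real assume e: "e > 0"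
  define \<epsilon> where "\<epsilon> = e / (b - a + 1)"
  have \<epsilon>: "\<epsilon> > 0" using e ab by (simp add: \<epsilon>_def)
  have "g i t - \<epsilon> * (t - a) \<le> 0"
  proof (rule right_deriv_barrier[OF fin _ _ _ t i, where g = "\<lambda>j s. g j s - \<epsilon> * (s - a)"])
    show "continuous_on {a..b} (\<lambda>s. g j s - \<epsilon> * (s - a))" if "j \<in> I" for j
      using cont[OF that] by (intro continuous_intros)
    show "g j a - \<epsilon> * (a - a) \<le> 0" if "j \<in> I" for j using start[OF that] by simp
    fix s j assume s: "s \<in> {a..<b}" and j: "j \<in> I"
      and all: "\<forall>l\<in>I. g l s - \<epsilon> * (s - a) \<le> 0" and gj: "g j s - \<epsilon> * (s - a) = 0"
    obtain d where "d \<le> 0" "(g j has_real_derivative d) (at_right s)"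
      using step[OF s j, of "\<epsilon> * (s - a)"] all gj \<epsilon> s by auto
    moreover have "((\<lambda>s. g j s - \<epsilon> * (s - a)) has_real_derivative d - \<epsilon>) (at_right s)"
      by (rule derivative_eq_intros calculation(2) | simp)+
    ultimately show "\<exists>d<0. ((\<lambda>s. g j s - \<epsilon> * (s - a)) has_real_derivative d) (at_right s)"
      using \<epsilon> by (intro exI[of _ "d - \<epsilon>"]) auto
  qed
  moreover have "\<epsilon> * (t - a) \<le> \<epsilon> * (b - a + 1)" using t \<epsilon> by (intro mult_left_mono) auto
  ultimately show "g i t \<le> 0 + e" using ab by (simp add: \<epsilon>_def)
qed

lemma right_deriv_upper_bound:
  fixes f \<Phi> \<phi> :: "real \<Rightarrow> real"
  assumes ab: "a \<le> b" and cont: "continuous_on {a..b} f"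
    and der: "\<And>t. t \<in> {a..<b} \<Longrightarrow> \<exists>d. d \<le> \<phi> t \<and> (f has_real_derivative d) (at_right t)"
    and \<Phi>: "\<And>t. (\<Phi> has_real_derivative \<phi> t) (at t)"
    and t: "t \<in> {a..b}"
  shows "f t \<le> f a + (\<Phi> t - \<Phi> a)"
proof -
  define g where "g s = f s - f a - (\<Phi> s - \<Phi> a)" for s
  have g_der: "\<exists>d\<le>0. (g has_real_derivative d) (at_right s)" if s: "s \<in> {a..<b}" for s
  proof -
    obtain d where d: "d \<le> \<phi> s" "(f has_real_derivative d) (at_right s)" using der[OF s] by blast
    have "(g has_real_derivative d - \<phi> s) (at_right s)"
      unfolding g_def[abs_def] by (rule derivative_eq_intros d(2) DERIV_subset[OF \<Phi>] | simp)+
    then show ?thesis using d(1) by (intro exI[of _ "d - \<phi> s"]) auto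
  qed
  have "continuous_on {a..b} \<Phi>"
    using \<Phi> by (meson DERIV_isCont continuous_at_imp_continuous_on)
  then have "continuous_on {a..b} g" unfolding g_def by (intro continuous_intros cont)
  moreover have "g a = 0" by (simp add: g_def)
  ultimately have "g t \<le> 0"
    using right_deriv_barrier_nonstrict[of "{()}" a b "\<lambda>_. g" t "()"] ab t g_der by simp
  then show ?thesis by (simp add: g_def)
qed

lemma right_deriv_lower_bound:
  fixes f \<Phi> \<phi> :: "real \<Rightarrow> real"
  assumes ab: "a \<le> b" and cont: "continuous_on {a..b} f"
    and der: "\<And>t. t \<in> {a..<b} \<Longrightarrow> \<exists>d. \<phi> t \<le> d \<and> (f has_real_derivative d) (at_right t)"
    and \<Phi>: "\<And>t. (\<Phi> has_real_derivative \<phi> t) (at t)"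
    and t: "t \<in> {a..b}"
  shows "f a + (\<Phi> t - \<Phi> a) \<le> f t"
proof -
  have "- f t \<le> - f a + (- \<Phi> t - - \<Phi> a)"
  proof (rule right_deriv_upper_bound[OF ab _ _ _ t, where f = "\<lambda>s. - f s" and \<phi> = "\<lambda>s. - \<phi> s"])
    show "continuous_on {a..b} (\<lambda>s. - f s)" by (intro continuous_intros cont)
    show "((\<lambda>s. - \<Phi> s) has_real_derivative - \<phi> s) (at s)" for s
      by (intro derivative_intros \<Phi>)
    fix s assume "s \<in> {a..<b}"
    then obtain d where "\<phi> s \<le> d" "(f has_real_derivative d) (at_right s)" using der by blast
    then show "\<exists>d. d \<le> - \<phi> s \<and> ((\<lambda>s. - f s) has_real_derivative d) (at_right s)"
      by (intro exI[of _ "- d"]) (auto intro: derivative_intros)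
  qed
  then show ?thesis by simp
qed

lemma right_deriv_const_imp_affine:
  fixes f :: "real \<Rightarrow> real"
  assumes ab: "a \<le> b" and cont: "continuous_on {a..b} f"
    and der: "\<And>t. t \<in> {a..<b} \<Longrightarrow> (f has_real_derivative c) (at_right t)"
    and t: "t \<in> {a..b}"
  shows "f t = f a + (t - a) * c"
proof -
  have \<Phi>: "((\<lambda>s. c * s) has_real_derivative c) (at s)" for s
    by (auto intro!: derivative_eq_intros)
  have "f t \<le> f a + (c * t - c * a)"
    by (rule right_deriv_upper_bound[OF ab cont _ \<Phi> t]) (use der in auto)
  moreover have "f a + (c * t - c * a) \<le> f t"
    by (rule right_deriv_lower_bound[OF ab cont _ \<Phi> t]) (use der in auto)
  ultimately show ?thesis by (simp add: algebra_simps)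
qed

lemma right_deriv_bounded_imp_lipschitz:
  fixes f :: "real \<Rightarrow> real"
  assumes ab: "a \<le> b" and cont: "continuous_on {a..b} f"
    and der: "\<And>t. t \<in> {a..<b} \<Longrightarrow> \<exists>d. \<bar>d\<bar> \<le> Q \<and> (f has_real_derivative d) (at_right t)"
  shows "\<bar>f b - f a\<bar> \<le> Q * (b - a)"
proof -
  have \<Phi>: "((\<lambda>s. Q * s) has_real_derivative Q) (at s)"
    "((\<lambda>s. - Q * s) has_real_derivative - Q) (at s)" for s
    by (auto intro!: derivative_eq_intros)
  have "\<exists>d. d \<le> Q \<and> (f has_real_derivative d) (at_right t)"
    "\<exists>d. - Q \<le> d \<and> (f has_real_derivative d) (at_right t)" if t: "t \<in> {a..<b}" for t
  proof -
    obtain d where "\<bar>d\<bar> \<le> Q" "(f has_real_derivative d) (at_right t)" using der[OF t] by blast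
    then show "\<exists>d. d \<le> Q \<and> (f has_real_derivative d) (at_right t)"
      "\<exists>d. - Q \<le> d \<and> (f has_real_derivative d) (at_right t)"
      by (auto simp: abs_le_iff intro!: exI[of _ d])
  qed
  then have "f b \<le> f a + (Q * b - Q * a)" "f a + (- Q * b - - Q * a) \<le> f b"
    using right_deriv_upper_bound[OF ab cont _ \<Phi>(1)] right_deriv_lower_bound[OF ab cont _ \<Phi>(2)] ab
    by auto
  then show ?thesis by (auto simp: algebra_simps abs_le_iff)
qed

lemma weighted_disagreement_le:
  fixes y w :: "nat \<Rightarrow> real"
  assumes w: "\<And>l. w l \<ge> 0" and p: "p < m" and wD: "(\<Sum>l<m. w l) \<le> D"
    and below: "\<And>l. l < m \<Longrightarrow> y l \<le> M" and yp: "y p \<le> M - A" and yi: "yi \<le> M"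
  shows "(\<Sum>l<m. w l * (y l - yi)) \<le> D * (M - yi) - w p * A"
proof -
  have "(\<Sum>l<m. w l * (y l - yi)) \<le> (\<Sum>l<m. w l * (M - yi) - (if l = p then w p * A else 0))"
  proof (rule sum_mono)
    fix l assume "l \<in> {..<m}"
    show "w l * (y l - yi) \<le> w l * (M - yi) - (if l = p then w p * A else 0)"
    proof (cases "l = p")
      case True
      have "w p * (y p - yi) \<le> w p * (M - A - yi)" using yp w[of p] by (intro mult_left_mono) auto
      then show ?thesis using True by (simp add: algebra_simps)
    next
      case False
      have "w l * (y l - yi) \<le> w l * (M - yi)" using below[of l] \<open>l \<in> {..<m}\<close> w[of l] by (intro mult_left_mono) auto
      then show ?thesis using False by simp
    qed
  qed
  also have "\<dots> = (\<Sum>l<m. w l) * (M - yi) - w p * A"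
    using p by (simp add: sum_subtractf sum_distrib_right)
  also have "\<dots> \<le> D * (M - yi) - w p * A" using wD yi by (simp add: mult_right_mono)
  finally show ?thesis .
qed

lemma power_floor_le_exp:
  fixes \<theta> T t :: real
  assumes \<theta>: "0 < \<theta>" "\<theta> < 1" and T: "T > 0" and t: "t \<ge> 0"
  shows "\<theta> ^ nat \<lfloor>t / T\<rfloor> \<le> exp (- (- ln \<theta> / T) * t) / \<theta>"
proof -
  define n where "n = nat \<lfloor>t / T\<rfloor>"
  have "t / T - 1 \<le> real n" using t T by (simp add: n_def)
  moreover have "ln \<theta> < 0" using \<theta> by simp
  ultimately have "real n * ln \<theta> \<le> (t / T - 1) * ln \<theta>" by (simp add: mult_right_mono_neg)
  also have "\<dots> = - (- ln \<theta> / T) * t - ln \<theta>" using T by (simp add: field_simps)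
  finally have "exp (real n * ln \<theta>) \<le> exp (- (- ln \<theta> / T) * t - ln \<theta>)" by simp
  then show ?thesis using \<theta> by (simp add: n_def exp_of_nat_mult exp_diff)
qed

section \<open>Consensus dynamics with a decaying perturbation\<close>

locale perturbed_consensus =
  fixes m :: nat and w :: "nat \<Rightarrow> nat \<Rightarrow> real" and \<beta> :: real
  assumes weights_nonneg: "\<And>i j. w i j \<ge> 0" and decay_pos: "\<beta> > 0"
begin

definition perturbed_solution :: "(nat \<Rightarrow> real \<Rightarrow> real) \<Rightarrow> bool" where
  "perturbed_solution y \<longleftrightarrow> (\<forall>i<m. continuous_on {0..} (y i) \<and>
     (\<forall>t\<ge>0. \<exists>e. \<bar>e\<bar> \<le> exp (- \<beta> * t) \<and>
        (y i has_real_derivative (\<Sum>j<m. w i j * (y j t - y i t)) + e) (at_right t)))"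

text \<open>The integral of the perturbation bound e^{-\<beta>u} over [t, \<infinity>), resp. over [a, s].\<close>

definition perturbation_tail :: "real \<Rightarrow> real" where
  "perturbation_tail t = exp (- \<beta> * t) / \<beta>"

definition perturbation_integral :: "real \<Rightarrow> real \<Rightarrow> real" where
  "perturbation_integral a s = perturbation_tail a - perturbation_tail s"

definition states_within :: "(nat \<Rightarrow> real \<Rightarrow> real) \<Rightarrow> real \<Rightarrow> real \<Rightarrow> real \<Rightarrow> bool" where
  "states_within y t lo hi \<longleftrightarrow> (\<forall>j<m. lo \<le> y j t \<and> y j t \<le> hi)"

lemma perturbation_tail_nonneg: "perturbation_tail t \<ge> 0"
  using decay_pos by (simp add: perturbation_tail_def)

lemma perturbation_tail_antimono: "a \<le> s \<Longrightarrow> perturbation_tail s \<le> perturbation_tail a"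
  using decay_pos by (simp add: perturbation_tail_def divide_right_mono)

lemma perturbation_integral_has_derivative:
  "(perturbation_integral a has_real_derivative exp (- \<beta> * s)) (at s within S)"
  unfolding perturbation_integral_def[abs_def] perturbation_tail_def using decay_pos
  by (auto intro!: derivative_eq_intros simp: field_simps)

lemma perturbation_integral_bounds:
  "a \<le> s \<Longrightarrow> 0 \<le> perturbation_integral a s \<and> perturbation_integral a s \<le> perturbation_tail a"
  using perturbation_tail_antimono[of a s] perturbation_tail_nonneg[of s]
  by (simp add: perturbation_integral_def)

lemma perturbed_solution_uminus:
  assumes "perturbed_solution y" shows "perturbed_solution (\<lambda>i t. - y i t)"
  unfolding perturbed_solution_def
proof (intro allI impI conjI)
  fix i and t :: real assume i: "i < m"
  show "continuous_on {0..} (\<lambda>t. - y i t)"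
    using assms i by (auto simp: perturbed_solution_def intro: continuous_intros)
  assume t: "0 \<le> t"
  obtain e where e: "\<bar>e\<bar> \<le> exp (- \<beta> * t)"
    "(y i has_real_derivative (\<Sum>j<m. w i j * (y j t - y i t)) + e) (at_right t)"
    using assms i t by (auto simp: perturbed_solution_def)
  have "((\<lambda>t. - y i t) has_real_derivative - ((\<Sum>j<m. w i j * (y j t - y i t)) + e)) (at_right t)"
    using e(2) by (rule derivative_intros)
  moreover have "- ((\<Sum>j<m. w i j * (y j t - y i t)) + e) = (\<Sum>j<m. w i j * (- y j t - - y i t)) + - e"
    by (simp add: sum_negf[symmetric] algebra_simps)
  ultimately show "\<exists>e. \<bar>e\<bar> \<le> exp (- \<beta> * t) \<and>
      ((\<lambda>t. - y i t) has_real_derivative (\<Sum>j<m. w i j * (- y j t - - y i t)) + e) (at_right t)"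
    using e(1) by (intro exI[of _ "- e"]) auto
qed

lemma perturbed_solution_comparison:
  assumes y: "perturbed_solution y" and ab: "0 \<le> a" "a \<le> b" and I: "I \<subseteq> {..<m}"
    and start: "\<And>i. i \<in> I \<Longrightarrow> y i a \<le> \<alpha> i"
    and touch: "\<And>s i \<delta> e. s \<in> {a..<b} \<Longrightarrow> i \<in> I \<Longrightarrow> \<delta> \<ge> 0 \<Longrightarrow>
        \<forall>j\<in>I. y j s \<le> \<alpha> j + \<kappa> j * (s - a) + perturbation_integral a s + \<delta> \<Longrightarrow>
        y i s = \<alpha> i + \<kappa> i * (s - a) + perturbation_integral a s + \<delta> \<Longrightarrow>
        \<bar>e\<bar> \<le> exp (- \<beta> * s) \<Longrightarrow> (\<Sum>j<m. w i j * (y j s - y i s)) + e \<le> \<kappa> i + exp (- \<beta> * s)"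
    and i: "i \<in> I" and s: "s \<in> {a..b}"
  shows "y i s \<le> \<alpha> i + \<kappa> i * (s - a) + perturbation_integral a s"
proof -
  define g where "g j s = y j s - (\<alpha> j + \<kappa> j * (s - a) + perturbation_integral a s)" for j s
  have "g i s \<le> 0"
  proof (rule right_deriv_barrier_nonstrict[OF finite_subset[OF I finite_lessThan] ab(2) _ _ _ s i])
    fix j assume j: "j \<in> I"
    have "continuous_on {0..} (y j)" using y j I by (auto simp: perturbed_solution_def)
    then have "continuous_on {a..b} (y j)" by (rule continuous_on_subset) (use ab in auto)
    moreover have "continuous_on {a..b} (perturbation_integral a)"
      using perturbation_integral_has_derivative
      by (meson DERIV_isCont continuous_at_imp_continuous_on)
    ultimately show "continuous_on {a..b} (g j)" unfolding g_def[abs_def]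
      by (intro continuous_intros)
    show "g j a \<le> 0" using start[OF j] by (simp add: g_def perturbation_integral_def)
  next
    fix t j \<delta> assume t: "t \<in> {a..<b}" and j: "j \<in> I" and \<delta>: "\<delta> \<ge> 0"
      and all: "\<forall>l\<in>I. g l t \<le> \<delta>" and gj: "g j t = \<delta>"
    have "j < m" "t \<ge> 0" using j I t ab by auto
    then obtain e where e: "\<bar>e\<bar> \<le> exp (- \<beta> * t)"
      "(y j has_real_derivative (\<Sum>l<m. w j l * (y l t - y j t)) + e) (at_right t)"
      using y unfolding perturbed_solution_def by blast
    define d where "d = (\<Sum>l<m. w j l * (y l t - y j t)) + e - (\<kappa> j + exp (- \<beta> * t))"
    have "d \<le> 0"
      using touch[OF t j \<delta> _ _ e(1)] all gj by (simp add: d_def g_def algebra_simps)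
    moreover have "(g j has_real_derivative d) (at_right t)"
      unfolding g_def[abs_def] d_def
      by (rule derivative_eq_intros e(2) perturbation_integral_has_derivative refl | simp)+
    ultimately show "\<exists>d\<le>0. (g j has_real_derivative d) (at_right t)" by blast
  qed
  then show ?thesis by (simp add: g_def)
qed

lemma perturbed_solution_upper:
  assumes y: "perturbed_solution y" and t0: "t0 \<ge> 0" and hi: "\<And>j. j < m \<Longrightarrow> y j t0 \<le> hi"
    and i: "i < m" and t: "t0 \<le> t"
  shows "y i t \<le> hi + perturbation_tail t0"
proof -
  have "y i t \<le> hi + 0 * (t - t0) + perturbation_integral t0 t"
  proof (rule perturbed_solution_comparison[OF y t0 t, of "{..<m}" "\<lambda>_. hi" "\<lambda>_. 0"])
    fix s j \<delta> e assume j: "j \<in> {..<m}"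
      and all: "\<forall>l\<in>{..<m}. y l s \<le> hi + 0 * (s - t0) + perturbation_integral t0 s + \<delta>"
      and eq: "y j s = hi + 0 * (s - t0) + perturbation_integral t0 s + \<delta>"
      and e: "\<bar>e\<bar> \<le> exp (- \<beta> * s)"
    have "(\<Sum>l<m. w j l * (y l s - y j s)) \<le> 0"
      using all eq weights_nonneg by (intro sum_nonpos) (auto intro: mult_nonneg_nonpos)
    then show "(\<Sum>l<m. w j l * (y l s - y j s)) + e \<le> 0 + exp (- \<beta> * s)" using e by simp
  qed (use hi i t in auto)
  then show ?thesis using perturbation_integral_bounds[OF t] by simp
qed

lemma perturbed_solution_lower:
  assumes y: "perturbed_solution y" and t0: "t0 \<ge> 0" and lo: "\<And>j. j < m \<Longrightarrow> lo \<le> y j t0"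
    and i: "i < m" and t: "t0 \<le> t"
  shows "lo - perturbation_tail t0 \<le> y i t"
  using perturbed_solution_upper[OF perturbed_solution_uminus[OF y] t0, of "- lo" i t] lo i t
  by force

lemma perturbed_solution_single_barrier:
  assumes y: "perturbed_solution y" and ab: "0 \<le> a" "a \<le> b" and i: "i < m"
    and start: "y i a \<le> \<alpha>"
    and drift: "\<And>s. s \<in> {a..<b} \<Longrightarrow> \<alpha> + \<kappa> * (s - a) \<le> y i s \<Longrightarrow>
        (\<Sum>j<m. w i j * (y j s - y i s)) \<le> \<kappa>"
  shows "y i b \<le> \<alpha> + \<kappa> * (b - a) + perturbation_tail a"
proof -
  have "y i b \<le> \<alpha> + \<kappa> * (b - a) + perturbation_integral a b"
  proof (rule perturbed_solution_comparison[OF y ab, of "{i}" "\<lambda>_. \<alpha>" "\<lambda>_. \<kappa>"])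
    fix s j \<delta> e assume s: "s \<in> {a..<b}" and j: "j \<in> {i}" and \<delta>: "\<delta> \<ge> 0"
      and eq: "y j s = \<alpha> + \<kappa> * (s - a) + perturbation_integral a s + \<delta>"
      and e: "\<bar>e\<bar> \<le> exp (- \<beta> * s)"
    have "\<alpha> + \<kappa> * (s - a) \<le> y i s" using eq j \<delta> perturbation_integral_bounds[of a s] s by auto
    then show "(\<Sum>l<m. w j l * (y l s - y j s)) + e \<le> \<kappa> + exp (- \<beta> * s)"
      using drift[OF s] e j by simp
  qed (use start i ab in auto)
  then show ?thesis using perturbation_integral_bounds[OF ab(2)] by simp
qed

end

locale rooted_perturbed_consensus = perturbed_consensus +
  fixes r :: nat and N :: nat and D :: real
  assumes root: "r < m" and N_pos: "N \<ge> 1" and D_ge_1: "D \<ge> 1"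
    and in_weight_le: "\<And>i. i < m \<Longrightarrow> (\<Sum>j<m. w i j) \<le> D"
    and paths_from_root: "\<And>i. i < m \<Longrightarrow> \<exists>n\<le>N. (edge m w ^^ n) r i"
begin

text \<open>A drop crosses one edge within hop_time and the whole tree within one round; the
  choice of hop_time makes the root rise by at most a quarter of the range per round.\<close>

definition hop_time :: real where "hop_time = 1 / (4 * D * real N)"

definition round_time :: real where "round_time = real N * hop_time"

lemma hop_time_pos: "hop_time > 0"
  using D_ge_1 N_pos by (simp add: hop_time_def)

lemma round_time_pos: "round_time > 0"
  using N_pos hop_time_pos by (simp add: round_time_def)

lemma D_round_time: "D * round_time = 1/4"
  using D_ge_1 N_pos by (simp add: round_time_def hop_time_def)

definition root_in_lower_half :: "(nat \<Rightarrow> real \<Rightarrow> real) \<Rightarrow> real \<Rightarrow> real \<Rightarrow> real \<Rightarrow> bool" where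
  "root_in_lower_half y t0 lo hi \<longleftrightarrow> perturbed_solution y \<and> t0 \<ge> 0 \<and>
     states_within y t0 lo hi \<and> y r t0 \<le> (lo + hi) / 2"

lemma root_drops:
  assumes W: "root_in_lower_half y t0 lo hi" and t: "t0 \<le> t" "t \<le> t0 + round_time"
  shows "y r t \<le> hi - (1/4) * (hi - lo) + (3/2) * perturbation_tail t0"
proof -
  define P where "P = perturbation_tail t0"
  have y: "perturbed_solution y" and t0: "t0 \<ge> 0" and b: "\<forall>j<m. lo \<le> y j t0 \<and> y j t0 \<le> hi"
    and mid: "y r t0 \<le> (lo + hi) / 2"
    using W by (auto simp: root_in_lower_half_def states_within_def)
  have P0: "P \<ge> 0" by (simp add: P_def perturbation_tail_nonneg)
  have spread: "hi - lo \<ge> 0" using b root by force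
  define \<kappa> where "\<kappa> = D * (hi - lo + 2 * P)"
  have \<kappa>: "\<kappa> \<ge> 0" using D_ge_1 spread P0 by (simp add: \<kappa>_def)
  have "y r t \<le> y r t0 + \<kappa> * (t - t0) + P"
  proof (unfold P_def, rule perturbed_solution_single_barrier[OF y t0 t(1) root order.refl])
    fix s assume s: "s \<in> {t0..<t}"
    have "lo - P \<le> y r s" using perturbed_solution_lower[OF y t0, of lo r s] b root s by (simp add: P_def)
    then have "D * (hi + P - y r s) \<le> \<kappa>" using D_ge_1 by (simp add: \<kappa>_def mult_left_mono)
    moreover have "(\<Sum>l<m. w r l * (y l s - y r s)) \<le> D * (hi + P - y r s) - w r r * 0"
      using perturbed_solution_upper[OF y t0, of hi] b s root weights_nonneg in_weight_le
        perturbed_solution_lower[OF y t0, of lo r s]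
      by (intro weighted_disagreement_le) (auto simp: P_def states_within_def)
    ultimately show "(\<Sum>l<m. w r l * (y l s - y r s)) \<le> \<kappa>" by simp
  qed
  also have "\<dots> \<le> (lo + hi) / 2 + \<kappa> * round_time + P"
    using mid mult_left_mono[of "t - t0" round_time \<kappa>] \<kappa> t by linarith
  also have "\<kappa> * round_time = (hi - lo + 2 * P) * (D * round_time)"
    by (simp add: \<kappa>_def algebra_simps)
  also have "\<dots> = (hi - lo + 2 * P) / 4" by (simp add: D_round_time)
  finally show ?thesis by (simp add: P_def field_simps)
qed

lemma edge_propagates_drop:
  assumes y: "perturbed_solution y" and t0: "t0 \<ge> 0" and b: "\<forall>j<m. y j t0 \<le> hi"
    and edge: "edge m w p i" and t1: "t0 \<le> t1"
    and hyp: "\<And>s. t1 \<le> s \<Longrightarrow> s \<le> t0 + round_time \<Longrightarrow> y p s \<le> hi + perturbation_tail t0 - A"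
    and t: "t1 + hop_time \<le> t" "t \<le> t0 + round_time"
  shows "y i t \<le> hi + 2 * perturbation_tail t0 - (w i p * hop_time / 2) * A"
proof -
  define P where "P = perturbation_tail t0"
  have P0: "P \<ge> 0" by (simp add: P_def perturbation_tail_nonneg)
  have p: "p < m" and i: "i < m" and wip: "w i p > 0" using edge by (auto simp: edge_def)
  have up: "y l s \<le> hi + P" if "l < m" "t0 \<le> s" for l s
    using perturbed_solution_upper[OF y t0, of hi] b that by (auto simp: P_def)
  have t1t: "t1 \<le> t" using t hop_time_pos by simp
  show ?thesis
  proof (cases "A \<le> 0")
    case True
    then have "0 \<le> - (w i p * hop_time / 2) * A"
      using wip hop_time_pos by (simp add: mult_nonneg_nonpos)
    then show ?thesis using up[OF i, of t] t1t t1 P0 by (simp add: P_def)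
  next
    case False
    define c where "c = w i p * A / 2"
    have c: "c > 0" using False wip by (simp add: c_def)
    have "y i t \<le> (hi + P) + (- c) * (t - t1) + perturbation_tail t1"
    proof (rule perturbed_solution_single_barrier[OF y _ t1t i up[OF i t1]])
      fix s assume s: "s \<in> {t1..<t}" and near_top: "hi + P + - c * (s - t1) \<le> y i s"
      have "c * (s - t1) \<le> c * round_time" using c s t t1 by (intro mult_left_mono) auto
      then have "hi + P - y i s \<le> c * round_time" using near_top by simp
      then have "D * (hi + P - y i s) \<le> D * (c * round_time)"
        using D_ge_1 by (intro mult_left_mono) auto
      then have "D * (hi + P - y i s) \<le> c * (D * round_time)" by (simp add: algebra_simps)
      then have "D * (hi + P - y i s) \<le> c / 4" by (simp add: D_round_time)
      moreover have "(\<Sum>l<m. w i l * (y l s - y i s)) \<le> D * (hi + P - y i s) - w i p * A"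
        using up s t1 hyp[of s] t p i weights_nonneg in_weight_le
        by (intro weighted_disagreement_le) (auto simp: P_def)
      ultimately show "(\<Sum>l<m. w i l * (y l s - y i s)) \<le> - c" using c by (simp add: c_def)
    qed (use t0 t1 in auto)
    also have "\<dots> \<le> hi + P - c * hop_time + P"
      using mult_left_mono[of hop_time "t - t1" c] c t perturbation_tail_antimono[OF t1]
      unfolding P_def by linarith
    finally show ?thesis by (simp add: P_def c_def algebra_simps)
  qed
qed

lemma drop_along_path:
  assumes "n \<le> N" and "(edge m w ^^ n) r i"
  shows "\<exists>a>0. \<exists>b\<ge>0. \<forall>y t0 lo hi. root_in_lower_half y t0 lo hi \<longrightarrow>
     (\<forall>t. t0 + real n * hop_time \<le> t \<and> t \<le> t0 + round_time \<longrightarrow>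
        y i t \<le> hi - a * (hi - lo) + b * perturbation_tail t0)"
  using assms
proof (induction n arbitrary: i)
  case 0
  then have "i = r" by simp
  then show ?case using root_drops by (intro exI[of _ "1/4"] exI[of _ "3/2"] conjI) auto
next
  case (Suc n)
  obtain p where p: "(edge m w ^^ n) r p" "edge m w p i" using Suc.prems(2) by (rule relpowp_Suc_E)
  obtain a b where ab: "a > 0" "b \<ge> 0" and IH: "\<And>y t0 lo hi s. root_in_lower_half y t0 lo hi \<Longrightarrow>
      t0 + real n * hop_time \<le> s \<Longrightarrow> s \<le> t0 + round_time \<Longrightarrow>
      y p s \<le> hi - a * (hi - lo) + b * perturbation_tail t0"
    using Suc.IH[OF _ p(1)] Suc.prems(1) by fastforce
  define c where "c = w i p * hop_time / 2"
  have c: "c > 0" using p(2) hop_time_pos by (simp add: c_def edge_def)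
  have "y i t \<le> hi - (c * a) * (hi - lo) + (c * b + 2) * perturbation_tail t0"
    if W: "root_in_lower_half y t0 lo hi"
      and t: "t0 + real (Suc n) * hop_time \<le> t" "t \<le> t0 + round_time" for y t0 lo hi t
  proof -
    define P where "P = perturbation_tail t0"
    have "y i t \<le> hi + 2 * P - c * (a * (hi - lo) - (b - 1) * P)"
      unfolding P_def c_def
    proof (rule edge_propagates_drop[OF _ _ _ p(2), of y t0 hi "t0 + real n * hop_time"])
      show "y p s \<le> hi + perturbation_tail t0 - (a * (hi - lo) - (b - 1) * perturbation_tail t0)"
        if "t0 + real n * hop_time \<le> s" "s \<le> t0 + round_time" for s
        using IH[OF W that] by (simp add: algebra_simps)
    qed (use W t hop_time_pos in \<open>auto simp: root_in_lower_half_def states_within_def algebra_simps\<close>)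
    moreover have "0 \<le> c * P" using c by (simp add: P_def perturbation_tail_nonneg)
    ultimately show ?thesis by (simp add: P_def algebra_simps)
  qed
  moreover have "c * a > 0" "c * b + 2 \<ge> 0" using c ab by auto
  ultimately show ?case by blast
qed

lemma uniform_drop:
  obtains a b where "0 < a" "a \<le> 1" "0 \<le> b"
    "\<And>i y t0 lo hi. i < m \<Longrightarrow> root_in_lower_half y t0 lo hi \<Longrightarrow>
       lo - perturbation_tail t0 \<le> y i (t0 + round_time) \<and>
       y i (t0 + round_time) \<le> hi - a * (hi - lo) + b * perturbation_tail t0"
proof -
  define drops where "drops i a b \<longleftrightarrow> (\<forall>y t0 lo hi. root_in_lower_half y t0 lo hi \<longrightarrow>
     y i (t0 + round_time) \<le> hi - a * (hi - lo) + b * perturbation_tail t0)" for i a b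
  have "\<forall>i\<in>{..<m}. \<exists>ab. fst ab > 0 \<and> snd ab \<ge> 0 \<and> drops i (fst ab) (snd ab)"
  proof
    fix i assume "i \<in> {..<m}"
    then obtain n where n: "n \<le> N" "(edge m w ^^ n) r i" using paths_from_root by blast
    have "real n * hop_time \<le> round_time"
      using n hop_time_pos by (simp add: round_time_def mult_right_mono)
    then show "\<exists>ab. fst ab > 0 \<and> snd ab \<ge> 0 \<and> drops i (fst ab) (snd ab)"
      using drop_along_path[OF n] unfolding drops_def
      by (metis add_le_cancel_left fst_conv snd_conv order.refl)
  qed
  then obtain f where f: "\<forall>i\<in>{..<m}. fst (f i) > 0 \<and> snd (f i) \<ge> 0 \<and> drops i (fst (f i)) (snd (f i))"
    by (rule bchoice[THEN exE])
  define a where "a = min 1 (Min ((\<lambda>i. fst (f i)) ` {..<m}))"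
  define b where "b = (\<Sum>i<m. snd (f i))"
  have "{..<m} \<noteq> {}" using root by auto
  then have a: "0 < a" "a \<le> 1" "\<And>i. i < m \<Longrightarrow> a \<le> fst (f i)"
    using f by (auto simp: a_def Min_gr_iff min.coboundedI2)
  have b: "0 \<le> b" "\<And>i. i < m \<Longrightarrow> snd (f i) \<le> b"
    using f by (auto simp: b_def intro: sum_nonneg member_le_sum)
  show thesis
  proof (rule that[OF a(1,2) b(1)], rule conjI)
    fix i y t0 lo hi assume i: "i < m" and W: "root_in_lower_half y t0 lo hi"
    show "lo - perturbation_tail t0 \<le> y i (t0 + round_time)"
      using W i round_time_pos perturbed_solution_lower[of y t0 lo i "t0 + round_time"]
      by (auto simp: root_in_lower_half_def states_within_def)
    have "hi - lo \<ge> 0" using W root by (force simp: root_in_lower_half_def states_within_def)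
    then have "a * (hi - lo) \<le> fst (f i) * (hi - lo)"
      "snd (f i) * perturbation_tail t0 \<le> b * perturbation_tail t0"
      using a(3)[OF i] b(2)[OF i] perturbation_tail_nonneg by (auto intro: mult_right_mono)
    moreover have "y i (t0 + round_time) \<le> hi - fst (f i) * (hi - lo) + snd (f i) * perturbation_tail t0"
      using f i W by (auto simp: drops_def)
    ultimately show "y i (t0 + round_time) \<le> hi - a * (hi - lo) + b * perturbation_tail t0"
      by linarith
  qed
qed

text \<open>If the root starts in the upper half, apply the lower-half case to the mirrored
  solution -y.\<close>

lemma window_contracts:
  obtains a b where "0 < a" "a \<le> 1" "0 \<le> b"
    "\<And>y t0 lo hi. perturbed_solution y \<Longrightarrow> t0 \<ge> 0 \<Longrightarrow> states_within y t0 lo hi \<Longrightarrow>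
       \<exists>lo' hi'. states_within y (t0 + round_time) lo' hi' \<and>
          hi' - lo' \<le> (1 - a) * (hi - lo) + b * perturbation_tail t0"
proof -
  obtain a b where a: "0 < a" "a \<le> 1" and b: "0 \<le> b" and drop: "\<And>i y t0 lo hi. i < m \<Longrightarrow>
      root_in_lower_half y t0 lo hi \<Longrightarrow> lo - perturbation_tail t0 \<le> y i (t0 + round_time) \<and>
      y i (t0 + round_time) \<le> hi - a * (hi - lo) + b * perturbation_tail t0"
    using uniform_drop by blast
  show thesis
  proof (rule that[OF a, of "b + 1"])
    show "0 \<le> b + 1" using b by simp
    fix y t0 lo hi assume y: "perturbed_solution y" and t0: "t0 \<ge> 0"
      and bounds: "states_within y t0 lo hi"
    define P where "P = perturbation_tail t0"
    show "\<exists>lo' hi'. states_within y (t0 + round_time) lo' hi' \<and>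
          hi' - lo' \<le> (1 - a) * (hi - lo) + (b + 1) * P"
    proof (cases "y r t0 \<le> (lo + hi) / 2")
      case True
      then have W: "root_in_lower_half y t0 lo hi"
        using y t0 bounds by (simp add: root_in_lower_half_def states_within_def)
      have "states_within y (t0 + round_time) (lo - P) (hi - a * (hi - lo) + b * P) \<and>
          (hi - a * (hi - lo) + b * P) - (lo - P) \<le> (1 - a) * (hi - lo) + (b + 1) * P"
        using drop[OF _ W] by (simp add: P_def states_within_def algebra_simps)
      then show ?thesis by blast
    next
      case False
      then have W: "root_in_lower_half (\<lambda>i t. - y i t) t0 (- hi) (- lo)"
        using perturbed_solution_uminus[OF y] t0 bounds
        by (auto simp: root_in_lower_half_def states_within_def)
      have "states_within y (t0 + round_time) (lo + a * (hi - lo) - b * P) (hi + P) \<and>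
          (hi + P) - (lo + a * (hi - lo) - b * P) \<le> (1 - a) * (hi - lo) + (b + 1) * P"
        using drop[OF _ W] by (simp add: P_def states_within_def algebra_simps)
      then show ?thesis by blast
    qed
  qed
qed

lemma perturbation_tail_multiple_le:
  assumes "exp (- \<beta> * T) \<le> \<theta>"
  shows "perturbation_tail (real n * T) \<le> \<theta> ^ n / \<beta>"
proof -
  have "exp (- \<beta> * (real n * T)) = exp (- \<beta> * T) ^ n"
    by (simp add: exp_of_nat_mult[symmetric] algebra_simps)
  also have "\<dots> \<le> \<theta> ^ n" using assms by (intro power_mono) auto
  finally show ?thesis using decay_pos by (simp add: perturbation_tail_def divide_right_mono)
qed

text \<open>The geometric rate \<theta> must dominate both the contraction factor of a round and the
  decay of the perturbation over a round.\<close>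

lemma spread_decays_geometrically:
  assumes y: "perturbed_solution y"
  obtains G \<theta> where "G \<ge> 0" "0 < \<theta>" "\<theta> < 1" "exp (- \<beta> * round_time) \<le> \<theta>"
    "\<And>n. \<exists>lo hi. states_within y (real n * round_time) lo hi \<and> hi - lo \<le> G * \<theta> ^ n"
proof -
  obtain a b where a: "0 < a" "a \<le> 1" and b: "0 \<le> b" and window: "\<And>t0 lo hi.
      t0 \<ge> 0 \<Longrightarrow> states_within y t0 lo hi \<Longrightarrow> \<exists>lo' hi'. states_within y (t0 + round_time) lo' hi' \<and>
          hi' - lo' \<le> (1 - a) * (hi - lo) + b * perturbation_tail t0"
    using window_contracts y by metis
  define \<rho> where "\<rho> = 1 - a"
  define \<theta> where "\<theta> = max ((1 + \<rho>) / 2) (exp (- \<beta> * round_time))"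
  have \<rho>: "0 \<le> \<rho>" "\<rho> < 1" using a by (auto simp: \<rho>_def)
  have "exp (- \<beta> * round_time) < 1" using decay_pos round_time_pos by simp
  then have \<theta>: "0 < \<theta>" "\<theta> < 1" "\<rho> < \<theta>" "exp (- \<beta> * round_time) \<le> \<theta>"
    using \<rho> by (auto simp: \<theta>_def less_max_iff_disj)
  define X where "X = (\<Sum>j<m. \<bar>y j 0\<bar>)"
  have X: "states_within y 0 (- X) X"
    using member_le_sum[of _ "{..<m}" "\<lambda>j. \<bar>y j 0\<bar>"] by (force simp: states_within_def X_def)
  define K where "K = b / \<beta>"
  define G where "G = max (2 * X) (K / (\<theta> - \<rho>))"
  have K_le: "K / (\<theta> - \<rho>) \<le> G" by (simp add: G_def)
  moreover have "0 \<le> K / (\<theta> - \<rho>)" using b decay_pos \<theta> by (simp add: K_def)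
  ultimately have G: "G \<ge> 0" by linarith
  have K: "K \<le> (\<theta> - \<rho>) * G" using K_le \<theta> by (simp add: pos_divide_le_eq mult.commute)
  have "\<exists>lo hi. states_within y (real n * round_time) lo hi \<and> hi - lo \<le> G * \<theta> ^ n" for n
  proof (induction n)
    case 0
    have "states_within y (real 0 * round_time) (- X) X \<and> X - - X \<le> G * \<theta> ^ 0"
      using X by (simp add: G_def)
    then show ?case by blast
  next
    case (Suc n)
    then obtain lo hi where lh: "states_within y (real n * round_time) lo hi" "hi - lo \<le> G * \<theta> ^ n"
      by blast
    obtain lo' hi' where lh': "states_within y (real (Suc n) * round_time) lo' hi'"
      "hi' - lo' \<le> \<rho> * (hi - lo) + b * perturbation_tail (real n * round_time)"
      using window[OF _ lh(1)] round_time_pos by (auto simp: \<rho>_def algebra_simps)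
    have "\<rho> * (hi - lo) \<le> \<rho> * (G * \<theta> ^ n)" using lh(2) \<rho> by (intro mult_left_mono)
    moreover have "b * perturbation_tail (real n * round_time) \<le> K * \<theta> ^ n"
      using mult_left_mono[OF perturbation_tail_multiple_le[OF \<theta>(4)] b] by (simp add: K_def)
    moreover have "K * \<theta> ^ n \<le> (\<theta> - \<rho>) * G * \<theta> ^ n" using K \<theta> by (intro mult_right_mono) auto
    ultimately have "hi' - lo' \<le> G * \<theta> ^ Suc n" using lh'(2) by (simp add: algebra_simps)
    then show ?case using lh'(1) by blast
  qed
  then show thesis using that G \<theta> by blast
qed

lemma perturbed_solution_exponential_consensus:
  assumes y: "perturbed_solution y"
  shows "\<exists>C \<epsilon>. C > 0 \<and> \<epsilon> > 0 \<and> (\<forall>i<m. \<forall>j<m. \<forall>t\<ge>0. \<bar>y i t - y j t\<bar> \<le> C * exp (- \<epsilon> * t))"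
proof -
  obtain G \<theta> where G: "G \<ge> 0" and \<theta>: "0 < \<theta>" "\<theta> < 1" "exp (- \<beta> * round_time) \<le> \<theta>"
    and spread: "\<And>n. \<exists>lo hi. states_within y (real n * round_time) lo hi \<and> hi - lo \<le> G * \<theta> ^ n"
    using spread_decays_geometrically[OF y] by blast
  define C where "C = (G + 2 / \<beta>) / \<theta>"
  define \<epsilon> where "\<epsilon> = - ln \<theta> / round_time"
  have "\<bar>y i t - y j t\<bar> \<le> C * exp (- \<epsilon> * t)" if "i < m" "j < m" "t \<ge> 0" for i j t
  proof -
    define n where "n = nat \<lfloor>t / round_time\<rfloor>"
    have n: "real n * round_time \<le> t"
      using that round_time_pos by (simp add: n_def) (metis floor_divide_lower)
    obtain lo hi where lh: "states_within y (real n * round_time) lo hi" "hi - lo \<le> G * \<theta> ^ n"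
      using spread by blast
    have "\<bar>y i t - y j t\<bar> \<le> (hi - lo) + 2 * perturbation_tail (real n * round_time)"
      using lh(1) that n round_time_pos
        perturbed_solution_upper[OF y _ _ _ n, of hi] perturbed_solution_lower[OF y _ _ _ n, of lo]
      by (smt (verit) mult_nonneg_nonneg of_nat_0_le_iff states_within_def)
    also have "\<dots> \<le> (G + 2 / \<beta>) * \<theta> ^ n"
      using lh(2) perturbation_tail_multiple_le[OF \<theta>(3), of n] by (simp add: algebra_simps)
    also have "\<dots> \<le> (G + 2 / \<beta>) * (exp (- \<epsilon> * t) / \<theta>)"
      using power_floor_le_exp[OF \<theta>(1,2) round_time_pos \<open>t \<ge> 0\<close>] G decay_pos
      by (intro mult_left_mono) (simp_all add: n_def \<epsilon>_def)
    finally show ?thesis by (simp add: C_def)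
  qed
  moreover have "\<epsilon> > 0" using \<theta> round_time_pos by (simp add: \<epsilon>_def divide_neg_pos)
  moreover have "C > 0" using G \<theta> decay_pos by (simp add: C_def add_nonneg_pos)
  ultimately show ?thesis by blast
qed

end

lemma (in perturbed_consensus) spanning_tree_exponential_consensus:
  assumes tree: "has_spanning_tree m w" and y: "perturbed_solution y"
  shows "\<exists>C \<epsilon>. C > 0 \<and> \<epsilon> > 0 \<and> (\<forall>i<m. \<forall>j<m. \<forall>t\<ge>0. \<bar>y i t - y j t\<bar> \<le> C * exp (- \<epsilon> * t))"
proof -
  obtain r where r: "r < m" "\<And>i. i < m \<Longrightarrow> (edge m w)\<^sup>*\<^sup>* r i"
    using tree unfolding has_spanning_tree_def by blast
  have "\<forall>i\<in>{..<m}. \<exists>n. (edge m w ^^ n) r i" using r(2) by (auto dest: rtranclp_imp_relpowp)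
  then obtain depth where depth: "\<forall>i\<in>{..<m}. (edge m w ^^ depth i) r i"
    by (rule bchoice[THEN exE])
  define N where "N = 1 + (\<Sum>i<m. depth i)"
  define D where "D = 1 + (\<Sum>i<m. \<Sum>j<m. w i j)"
  interpret rooted_perturbed_consensus m w \<beta> r N D
  proof unfold_locales
    show "r < m" "1 \<le> N" using r(1) by (simp_all add: N_def)
    show "1 \<le> D" using weights_nonneg by (simp add: D_def sum_nonneg)
    fix i assume i: "i < m"
    have "(\<Sum>j<m. w i j) \<le> (\<Sum>i<m. \<Sum>j<m. w i j)"
      using i weights_nonneg by (intro member_le_sum[of i "{..<m}" "\<lambda>i. \<Sum>j<m. w i j"]) (auto intro: sum_nonneg)
    then show "(\<Sum>j<m. w i j) \<le> D" by (simp add: D_def)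
    have "depth i \<le> N" using i member_le_sum[of i "{..<m}" depth] by (simp add: N_def)
    then show "\<exists>n\<le>N. (edge m w ^^ n) r i" using depth i by blast
  qed
  show ?thesis by (rule perturbed_solution_exponential_consensus[OF y])
qed

section \<open>The self-triggered system\<close>

definition horizon :: "(real \<Rightarrow> bool) \<Rightarrow> real \<Rightarrow> ereal" where
  "horizon P s = Sup {ereal \<tau> | \<tau>. s \<le> \<tau> \<and> (\<forall>u\<in>{s..\<tau>}. P u)}"

lemma less_horizon_imp: "ereal u < horizon P s \<Longrightarrow> s \<le> u \<Longrightarrow> P u"
  unfolding horizon_def less_Sup_iff by force

lemma horizon_eq_imp_fails_soon:
  assumes h: "horizon P s = ereal t" and s: "s \<le> t" and \<gamma>: "\<gamma> > 0"
  shows "\<exists>v. t \<le> v \<and> v \<le> t + \<gamma> \<and> \<not> P v"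
proof (rule ccontr)
  assume "\<not> ?thesis"
  then have "P u" if "u \<in> {s..t + \<gamma>}" for u
    using less_horizon_imp[of u P s] h that by (cases "u < t") auto
  then have "ereal (t + \<gamma>) \<le> horizon P s"
    unfolding horizon_def using s \<gamma> by (intro Sup_upper) auto
  then show False using h \<gamma> by simp
qed

lemma tau_pred_eq_horizon:
  "tau_pred \<beta> m w x K tt i tk s =
     horizon (\<lambda>u. \<bar>ctrl m w x i tk - qpred m w x K tt i tk s u\<bar> \<le> exp (- \<beta> * u)) s"
  by (simp add: tau_pred_def horizon_def)

lemma enat_le_less_trans: "k \<le> l \<Longrightarrow> enat l < K \<Longrightarrow> enat k < K"
  by (meson enat_ord_simps(1) le_less_trans)

lemma restart_between:
  assumes "tk \<le> u"
  shows "tk \<le> restart m w K tt i tk u" and "restart m w K tt i tk u \<le> u"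
proof -
  let ?R = "{tk} \<union> {tt p l | p l. p < m \<and> w i p > 0 \<and> enat l < K p \<and> tk < tt p l \<and> tt p l < u}"
  have bdd: "bdd_above ?R" by (rule bdd_aboveI[of _ u]) (use assms in auto)
  show "tk \<le> restart m w K tt i tk u" unfolding restart_def by (rule cSup_upper[OF _ bdd]) auto
  show "restart m w K tt i tk u \<le> u" unfolding restart_def by (rule cSup_least) (use assms in auto)
qed

lemma in_neighbour_trigger_le_restart:
  assumes "p < m" "w i p > 0" "enat l < K p" "tk < tt p l" "tt p l < u"
  shows "tt p l \<le> restart m w K tt i tk u"
proof -
  let ?R = "{tk} \<union> {tt p l | p l. p < m \<and> w i p > 0 \<and> enat l < K p \<and> tk < tt p l \<and> tt p l < u}"
  have bdd: "bdd_above ?R" by (rule bdd_aboveI[of _ u]) (use assms in auto)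
  show ?thesis unfolding restart_def by (rule cSup_upper[OF _ bdd]) (use assms in blast)
qed

lemma ctrl_eq_weighted_disagreement:
  assumes "i < m"
  shows "ctrl m w y i t = (\<Sum>j<m. w i j * (y j t - y i t))"
proof -
  have "(\<Sum>j<m. (if i = j then (\<Sum>k<m. w i k) else 0) * y j t) = (\<Sum>k<m. w i k) * y i t"
    using assms by (simp add: if_distrib[of "\<lambda>c. c * y _ t"] sum.delta cong: if_cong)
  then show ?thesis
    by (simp add: ctrl_def lap_def left_diff_distrib right_diff_distrib sum_subtractf
        sum_distrib_right)
qed

definition lap_norm :: "nat \<Rightarrow> (nat \<Rightarrow> nat \<Rightarrow> real) \<Rightarrow> real" where
  "lap_norm m w = (\<Sum>i<m. \<Sum>j<m. \<bar>lap m w i j\<bar>)"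

lemma lap_norm_nonneg: "lap_norm m w \<ge> 0"
  unfolding lap_norm_def by (intro sum_nonneg) auto

lemma lap_row_sum_bound:
  assumes i: "i < m" and y: "\<And>j. j < m \<Longrightarrow> \<bar>y j\<bar> \<le> Y"
  shows "\<bar>\<Sum>j<m. lap m w i j * y j\<bar> \<le> lap_norm m w * Y"
proof -
  have Y: "Y \<ge> 0" using y[OF i] by simp
  have "\<bar>\<Sum>j<m. lap m w i j * y j\<bar> \<le> (\<Sum>j<m. \<bar>lap m w i j\<bar> * Y)"
    by (rule order_trans[OF sum_abs sum_mono]) (auto simp: abs_mult intro: mult_left_mono y)
  also have "\<dots> = (\<Sum>j<m. \<bar>lap m w i j\<bar>) * Y" by (simp add: sum_distrib_right)
  also have "\<dots> \<le> lap_norm m w * Y"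
    unfolding lap_norm_def using i Y
    by (intro mult_right_mono member_le_sum[of i "{..<m}" "\<lambda>i. \<Sum>j<m. \<bar>lap m w i j\<bar>"])
      (auto intro: sum_nonneg)
  finally show ?thesis .
qed

lemma ctrl_bound:
  "i < m \<Longrightarrow> (\<And>j. j < m \<Longrightarrow> \<bar>y j t\<bar> \<le> Y) \<Longrightarrow> \<bar>ctrl m w y i t\<bar> \<le> lap_norm m w * Y"
  using lap_row_sum_bound[of i m "\<lambda>j. y j t" Y w] by (simp add: ctrl_def)

lemma ctrl_diff_bound:
  assumes "i < m" and "\<And>j. j < m \<Longrightarrow> \<bar>y j t - y j s\<bar> \<le> Y"
  shows "\<bar>ctrl m w y i t - ctrl m w y i s\<bar> \<le> lap_norm m w * Y"
proof -
  have "ctrl m w y i t - ctrl m w y i s = - (\<Sum>j<m. lap m w i j * (y j t - y j s))"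
    by (simp add: ctrl_def algebra_simps sum_subtractf)
  then show ?thesis using lap_row_sum_bound[of i m "\<lambda>j. y j t - y j s" Y w] assms by simp
qed

lemma qpred_affine:
  assumes "i < m"
  shows "qpred m w x K tt i tk s u = qpred m w x K tt i tk s s
     - (u - s) * (\<Sum>j<m. lap m w i j *
         (if j = i then ctrl m w x i tk else ctrl m w x j (last_trig K tt j s)))"
proof -
  let ?q = "\<lambda>j. ctrl m w x j (last_trig K tt j s)"
  have split: "(\<Sum>j<m. lap m w i j * (if j = i then ctrl m w x i tk else ?q j))
     = lap m w i i * ctrl m w x i tk + (\<Sum>j\<in>{..<m} - {i}. lap m w i j * ?q j)"
    using assms by (subst sum.remove[of _ i]) (auto intro!: sum.cong)
  have "(\<Sum>j\<in>{..<m} - {i}. lap m w i j *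
          (x j (last_trig K tt j s) + (u - last_trig K tt j s) * ?q j))
      = (\<Sum>j\<in>{..<m} - {i}. lap m w i j *
          (x j (last_trig K tt j s) + (s - last_trig K tt j s) * ?q j))
        + (u - s) * (\<Sum>j\<in>{..<m} - {i}. lap m w i j * ?q j)"
    by (simp add: sum_distrib_left sum.distrib[symmetric] algebra_simps)
  then show ?thesis unfolding split by (simp add: qpred_def algebra_simps)
qed

locale self_triggered_system = perturbed_consensus +
  fixes x :: "nat \<Rightarrow> real \<Rightarrow> real" and K :: "nat \<Rightarrow> enat" and tt :: "nat \<Rightarrow> nat \<Rightarrow> real"
  assumes system: "system_S m w x K tt"
    and triggering: "self_triggered \<beta> m w x K tt"
begin

abbreviation "q \<equiv> ctrl m w x"
abbreviation "lt \<equiv> last_trig K tt"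
abbreviation "\<Lambda> \<equiv> lap_norm m w"

lemma first_trigger: "i < m \<Longrightarrow> tt i 0 = 0"
  using triggering by (simp add: self_triggered_def)

lemma first_trigger_exists: "i < m \<Longrightarrow> enat 0 < K i"
  using triggering by (simp add: self_triggered_def)

lemma trigger_less_next: "i < m \<Longrightarrow> enat (Suc k) < K i \<Longrightarrow> tt i k < tt i (Suc k)"
  using triggering by (simp add: self_triggered_def)

lemma prediction_valid:
  "i < m \<Longrightarrow> enat k < K i \<Longrightarrow> tt i k < u \<Longrightarrow> ereal u < next_trig K tt i k \<Longrightarrow>
    ereal u < tau_pred \<beta> m w x K tt i (tt i k) (restart m w K tt i (tt i k) u)"
  using triggering unfolding self_triggered_def by blast

lemma prediction_expires_at_trigger:
  "i < m \<Longrightarrow> enat (Suc k) < K i \<Longrightarrow>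
    tau_pred \<beta> m w x K tt i (tt i k) (restart m w K tt i (tt i k) (tt i (Suc k))) = ereal (tt i (Suc k))"
  using triggering unfolding self_triggered_def by (meson Suc_ile_eq order.strict_implies_order)

lemma trigger_strict_mono: "i < m \<Longrightarrow> k < l \<Longrightarrow> enat l < K i \<Longrightarrow> tt i k < tt i l"
proof (induction l)
  case (Suc l)
  then have "tt i l < tt i (Suc l)" by (intro trigger_less_next)
  moreover have "k < l \<Longrightarrow> tt i k < tt i l" using Suc enat_le_less_trans[of l "Suc l"] by auto
  ultimately show ?case using Suc by (cases "k = l") auto
qed simp

lemma trigger_mono: "i < m \<Longrightarrow> k \<le> l \<Longrightarrow> enat l < K i \<Longrightarrow> tt i k \<le> tt i l"
  using trigger_strict_mono by (cases "k = l") (auto simp: order.strict_implies_order)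

lemma trigger_nonneg: "i < m \<Longrightarrow> enat k < K i \<Longrightarrow> tt i k \<ge> 0"
  using trigger_mono[of i 0 k] first_trigger by simp

lemma state_continuous: "i < m \<Longrightarrow> continuous_on {0..} (x i)"
  using system by (simp add: system_S_def)

lemma state_right_deriv: "i < m \<Longrightarrow> s \<ge> 0 \<Longrightarrow> (x i has_real_derivative q i (lt i s)) (at_right s)"
  using system by (simp add: system_S_def)

lemma past_triggers_nonempty: "j < m \<Longrightarrow> s \<ge> 0 \<Longrightarrow> {tt j k | k. enat k < K j \<and> tt j k \<le> s} \<noteq> {}"
  using first_trigger_exists first_trigger by fastforce

lemma past_triggers_bdd: "bdd_above {tt j k | k. enat k < K j \<and> tt j k \<le> s}"
  by (rule bdd_aboveI[of _ s]) auto

lemma trigger_le_last_trig: "j < m \<Longrightarrow> enat k < K j \<Longrightarrow> tt j k \<le> s \<Longrightarrow> tt j k \<le> lt j s"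
  unfolding last_trig_def by (rule cSup_upper[OF _ past_triggers_bdd]) auto

lemma last_trig_le: "j < m \<Longrightarrow> s \<ge> 0 \<Longrightarrow> lt j s \<le> s"
  unfolding last_trig_def by (rule cSup_least[OF past_triggers_nonempty]) auto

lemma last_trig_nonneg: "j < m \<Longrightarrow> s \<ge> 0 \<Longrightarrow> 0 \<le> lt j s"
  using trigger_le_last_trig[of j 0 s] first_trigger_exists first_trigger by simp

lemma last_trig_cong:
  assumes "\<And>k. enat k < K j \<Longrightarrow> tt j k \<le> s \<longleftrightarrow> tt j k \<le> v"
  shows "lt j v = lt j s"
proof -
  have "{tt j k | k. enat k < K j \<and> tt j k \<le> s} = {tt j k | k. enat k < K j \<and> tt j k \<le> v}"
    using assms by blast
  then show ?thesis by (simp add: last_trig_def)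
qed

lemma last_trig_const:
  assumes "j < m" "lt j s \<le> v" "v \<le> s"
  shows "lt j v = lt j s"
proof (rule last_trig_cong)
  fix k assume "enat k < K j"
  then show "tt j k \<le> s \<longleftrightarrow> tt j k \<le> v"
    using trigger_le_last_trig[of j k s] assms by force
qed

lemma state_affine_while_last_trig_const:
  assumes j: "j < m" and ab: "0 \<le> a" "a \<le> b" and c: "\<And>u. u \<in> {a..<b} \<Longrightarrow> lt j u = a"
    and v: "v \<in> {a..b}"
  shows "x j v = x j a + (v - a) * q j a"
proof (rule right_deriv_const_imp_affine[OF ab(2) _ _ v])
  show "continuous_on {a..b} (x j)"
    using state_continuous[OF j] by (rule continuous_on_subset) (use ab in auto)
  show "(x j has_real_derivative q j a) (at_right t)" if "t \<in> {a..<b}" for t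
    using state_right_deriv[OF j, of t] c[OF that] that ab by simp
qed

lemma state_affine_since_last_trig:
  assumes "j < m" "s \<ge> 0" "v \<in> {lt j s..s}"
  shows "x j v = x j (lt j s) + (v - lt j s) * q j (lt j s)"
  using assms last_trig_nonneg[OF assms(1,2)] last_trig_le[OF assms(1,2)]
  by (intro state_affine_while_last_trig_const) (auto intro: last_trig_const)

lemma last_trig_before_next:
  assumes i: "i < m" and k: "enat k < K i" and u: "tt i k \<le> u" "ereal u < next_trig K tt i k"
  shows "lt i u = tt i k"
proof -
  have u0: "u \<ge> 0" using trigger_nonneg[OF i k] u by simp
  have "tt i l \<le> tt i k" if l: "enat l < K i" "tt i l \<le> u" for l
  proof (rule ccontr)
    assume "\<not> tt i l \<le> tt i k"
    then have "k < l" using trigger_mono[OF i _ l(1), of k] by (meson not_le_imp_less trigger_mono[OF i _ k])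
    then have "enat (Suc k) < K i" using enat_le_less_trans[OF _ l(1)] by simp
    then have "u < tt i (Suc k)" using u(2) by (simp add: next_trig_def)
    moreover have "tt i (Suc k) \<le> tt i l" using trigger_mono[OF i _ l(1)] \<open>k < l\<close> by simp
    ultimately show False using l(2) by simp
  qed
  then have "lt i u \<le> tt i k"
    unfolding last_trig_def by (intro cSup_least[OF past_triggers_nonempty[OF i u0]]) auto
  moreover have "tt i k \<le> lt i u" using trigger_le_last_trig[OF i k u(1)] .
  ultimately show ?thesis by simp
qed

lemma state_bounded: "\<exists>X. \<forall>j<m. \<forall>t\<in>{0..B}. \<bar>x j t\<bar> \<le> X"
proof -
  have "bounded (\<Union>j<m. x j ` {0..B})"
    using continuous_on_subset[OF state_continuous]
    by (intro bounded_UN ballI compact_imp_bounded compact_continuous_image) auto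
  then show ?thesis by (auto simp: bounded_real)
qed

lemma state_lipschitz:
  assumes X: "\<forall>j<m. \<forall>t\<in>{0..B}. \<bar>x j t\<bar> \<le> X" and j: "j < m" and uv: "0 \<le> u" "u \<le> v" "v \<le> B"
  shows "\<bar>x j v - x j u\<bar> \<le> \<Lambda> * X * (v - u)"
proof (rule right_deriv_bounded_imp_lipschitz[OF uv(2)])
  show "continuous_on {u..v} (x j)"
    using state_continuous[OF j] by (rule continuous_on_subset) (use uv in auto)
  fix t assume t: "t \<in> {u..<v}"
  then have t0: "t \<ge> 0" using uv by auto
  have "\<bar>q j (lt j t)\<bar> \<le> \<Lambda> * X"
    using last_trig_nonneg[OF j t0] last_trig_le[OF j t0] t uv X by (intro ctrl_bound[OF j]) auto
  then show "\<exists>d. \<bar>d\<bar> \<le> \<Lambda> * X \<and> (x j has_real_derivative d) (at_right t)"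
    using state_right_deriv[OF j t0] by blast
qed

lemma qpred_eq_ctrl:
  assumes i: "i < m" and own: "x i tk + (v - tk) * q i tk = x i v"
    and others: "\<And>j. j < m \<Longrightarrow> j \<noteq> i \<Longrightarrow> w i j > 0 \<Longrightarrow>
       x j (lt j s) + (v - lt j s) * q j (lt j s) = x j v"
  shows "qpred m w x K tt i tk s v = q i v"
proof -
  have "lap m w i j * (x j (lt j s) + (v - lt j s) * q j (lt j s)) = lap m w i j * x j v"
    if "j \<in> {..<m} - {i}" for j
    using others[of j] that weights_nonneg[of i j] by (cases "w i j > 0") (auto simp: lap_def)
  then have "(\<Sum>j\<in>{..<m} - {i}. lap m w i j * (x j (lt j s) + (v - lt j s) * q j (lt j s)))
      = (\<Sum>j\<in>{..<m} - {i}. lap m w i j * x j v)" by (rule sum.cong[OF refl])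
  moreover have "(\<Sum>j<m. lap m w i j * x j v)
      = lap m w i i * x i v + (\<Sum>j\<in>{..<m} - {i}. lap m w i j * x j v)"
    using i by (subst sum.remove[of _ i]) auto
  ultimately show ?thesis using own by (simp add: qpred_def ctrl_def)
qed

lemma prediction_drift:
  assumes X: "\<forall>j<m. \<forall>t\<in>{0..B}. \<bar>x j t\<bar> \<le> X" and i: "i < m" and k: "enat (Suc k) < K i"
    and s: "tt i k \<le> s" "s \<le> tt i (Suc k)" and v: "s \<le> v" "v \<le> B"
  shows "\<bar>q i (tt i k) - qpred m w x K tt i (tt i k) s v\<bar> \<le> \<Lambda> * (\<Lambda> * X) * (v - tt i k)"
proof -
  define tk where "tk = tt i k"
  have k': "enat k < K i" using enat_le_less_trans[OF _ k] by simp
  have tk0: "tk \<ge> 0" using trigger_nonneg[OF i k'] by (simp add: tk_def)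
  have s0: "s \<ge> 0" using tk0 s by (simp add: tk_def)
  have own: "x i s = x i tk + (s - tk) * q i tk"
  proof (rule state_affine_while_last_trig_const[OF i tk0, of s s])
    show "tk \<le> s" "s \<in> {tk..s}" using s by (simp_all add: tk_def)
    fix u assume "u \<in> {tk..<s}"
    then show "lt i u = tk"
      using last_trig_before_next[OF i k', of u] s k by (auto simp: tk_def next_trig_def)
  qed
  have qs: "qpred m w x K tt i tk s s = q i s"
    using own state_affine_since_last_trig[OF _ s0, of _ s] last_trig_le[OF _ s0]
    by (intro qpred_eq_ctrl[OF i]) auto
  have "\<bar>q i s - q i tk\<bar> \<le> \<Lambda> * (\<Lambda> * X * (s - tk))"
    using state_lipschitz[OF X _ tk0] s v by (intro ctrl_diff_bound[OF i]) (auto simp: tk_def)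
  moreover have "\<bar>q i s - qpred m w x K tt i tk s v\<bar> \<le> (v - s) * (\<Lambda> * (\<Lambda> * X))"
  proof -
    have "\<bar>\<Sum>j<m. lap m w i j * (if j = i then q i tk else q j (lt j s))\<bar> \<le> \<Lambda> * (\<Lambda> * X)"
    proof (rule lap_row_sum_bound[OF i])
      fix j assume j: "j < m"
      have "\<bar>q l r\<bar> \<le> \<Lambda> * X" if "l < m" "0 \<le> r" "r \<le> B" for l r
        using X that by (intro ctrl_bound) auto
      then show "\<bar>if j = i then q i tk else q j (lt j s)\<bar> \<le> \<Lambda> * X"
        using i j tk0 s v last_trig_nonneg[OF j s0] last_trig_le[OF j s0] by (auto simp: tk_def)
    qed
    then show ?thesis
      using qpred_affine[OF i, of w x K tt tk s v] qs v by (simp add: abs_mult mult_left_mono)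
  qed
  ultimately have "\<bar>q i tk - qpred m w x K tt i tk s v\<bar> \<le> \<Lambda> * (\<Lambda> * X) * ((s - tk) + (v - s))"
    by (simp add: algebra_simps abs_minus_commute)
  then show ?thesis by (simp add: tk_def)
qed

text \<open>Right after a trigger the prediction is violated, although the true control has
  drifted only by the Lipschitz rate: consecutive triggers are separated uniformly on
  bounded time intervals.\<close>

lemma inter_trigger_gap:
  assumes X: "\<forall>j<m. \<forall>t\<in>{0..B + 1}. \<bar>x j t\<bar> \<le> X" and i: "i < m" and k: "enat (Suc k) < K i"
    and t1B: "tt i (Suc k) \<le> B"
  shows "exp (- \<beta> * (B + 1)) \<le> \<Lambda> * (\<Lambda> * X) * (tt i (Suc k) - tt i k)"
proof (rule field_le_epsilon)
  fix e :: real assume e: "e > 0"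
  define L where "L = \<Lambda> * (\<Lambda> * X)"
  define s where "s = restart m w K tt i (tt i k) (tt i (Suc k))"
  have gap: "tt i k < tt i (Suc k)" using trigger_less_next[OF i k] .
  have t1: "0 \<le> tt i (Suc k)" using trigger_nonneg[OF i k] .
  have s: "tt i k \<le> s" "s \<le> tt i (Suc k)" unfolding s_def using restart_between gap by auto
  have L0: "L \<ge> 0"
    using X i t1 t1B lap_norm_nonneg by (force simp: L_def intro!: mult_nonneg_nonneg)
  define \<gamma> where "\<gamma> = min 1 (e / (L + 1))"
  have \<gamma>: "0 < \<gamma>" "\<gamma> \<le> 1" "L * \<gamma> \<le> e"
    using e L0 by (auto simp: \<gamma>_def min_def field_simps mult_left_le)
  obtain v where v: "tt i (Suc k) \<le> v" "v \<le> tt i (Suc k) + \<gamma>"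
    and fails: "\<not> \<bar>q i (tt i k) - qpred m w x K tt i (tt i k) s v\<bar> \<le> exp (- \<beta> * v)"
    using horizon_eq_imp_fails_soon[OF _ s(2) \<gamma>(1)] prediction_expires_at_trigger[OF i k]
    by (auto simp: tau_pred_eq_horizon s_def)
  have "exp (- \<beta> * (B + 1)) \<le> exp (- \<beta> * v)" using v t1B \<gamma> decay_pos by simp
  also have "\<dots> \<le> L * (v - tt i k)"
    using fails prediction_drift[OF X i k s order_trans[OF s(2) v(1)]] v t1B \<gamma>
    by (simp add: L_def)
  also have "\<dots> \<le> L * (tt i (Suc k) - tt i k) + L * \<gamma>"
    using mult_left_mono[OF v(2) L0] by (simp add: algebra_simps)
  finally show "exp (- \<beta> * (B + 1)) \<le> \<Lambda> * (\<Lambda> * X) * (tt i (Suc k) - tt i k) + e"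
    using \<gamma>(3) by (simp add: L_def)
qed

lemma finitely_many_triggers: "i < m \<Longrightarrow> finite {k. enat k < K i \<and> tt i k \<le> B}"
proof -
  assume i: "i < m"
  define B' where "B' = max B 0"
  obtain X where X: "\<forall>j<m. \<forall>t\<in>{0..B' + 1}. \<bar>x j t\<bar> \<le> X" using state_bounded by blast
  have "0 \<le> X" using X i by (force simp: B'_def)
  define \<delta> where "\<delta> = exp (- \<beta> * (B' + 1)) / (\<Lambda> * (\<Lambda> * X) + 1)"
  have \<delta>: "\<delta> > 0" using \<open>0 \<le> X\<close> lap_norm_nonneg by (simp add: \<delta>_def add_nonneg_pos)
  have step: "\<delta> \<le> tt i (Suc k) - tt i k" if "enat (Suc k) < K i" "tt i (Suc k) \<le> B'" for k
  proof -
    have "exp (- \<beta> * (B' + 1)) \<le> (\<Lambda> * (\<Lambda> * X) + 1) * (tt i (Suc k) - tt i k)"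
      using inter_trigger_gap[OF X i that] trigger_less_next[OF i that(1)] by (simp add: algebra_simps)
    then show ?thesis using \<open>0 \<le> X\<close> lap_norm_nonneg
      by (simp add: \<delta>_def divide_le_eq mult.commute add_nonneg_pos)
  qed
  have linear: "real k * \<delta> \<le> tt i k" if "enat k < K i" "tt i k \<le> B'" for k
    using that
  proof (induction k)
    case (Suc k)
    have k: "enat k < K i" using enat_le_less_trans[OF _ Suc.prems(1)] by simp
    then have "real k * \<delta> \<le> tt i k" using Suc trigger_less_next[OF i Suc.prems(1)] by simp
    then show ?case using step[OF Suc.prems] by (simp add: algebra_simps)
  qed (simp add: first_trigger[OF i])
  have "{k. enat k < K i \<and> tt i k \<le> B} \<subseteq> {..nat \<lceil>B' / \<delta>\<rceil>}"
  proof
    fix k assume "k \<in> {k. enat k < K i \<and> tt i k \<le> B}"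
    then have "real k * \<delta> \<le> B'" using linear[of k] by (force simp: B'_def)
    then have "real k \<le> B' / \<delta>" using \<delta> by (simp add: le_divide_eq)
    then show "k \<in> {..nat \<lceil>B' / \<delta>\<rceil>}" by (simp add: nat_le_iff ceiling_le_iff) linarith
  qed
  then show ?thesis by (rule finite_subset) simp
qed

lemma last_trig_attained:
  assumes i: "i < m" and t: "t \<ge> 0"
  obtains k where "enat k < K i" "tt i k = lt i t" "ereal t < next_trig K tt i k"
proof -
  let ?past = "{tt i k | k. enat k < K i \<and> tt i k \<le> t}"
  have "?past = tt i ` {k. enat k < K i \<and> tt i k \<le> t}" by auto
  then have fin: "finite ?past" using finitely_many_triggers[OF i, of t] by simp
  have "lt i t = Max ?past"
    unfolding last_trig_def using fin past_triggers_nonempty[OF i t] by (rule cSup_eq_Max)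
  moreover have "Max ?past \<in> ?past" using fin past_triggers_nonempty[OF i t] by (rule Max_in)
  ultimately have "lt i t \<in> ?past" by simp
  then obtain k where k: "enat k < K i" "tt i k \<le> t" "tt i k = lt i t" by auto
  have "t < tt i (Suc k)" if "enat (Suc k) < K i"
    using trigger_le_last_trig[OF i that, of t] trigger_less_next[OF i that] k by force
  then have "ereal t < next_trig K tt i k" by (simp add: next_trig_def)
  then show thesis using k that by blast
qed

text \<open>Between the restart s and u no in-neighbour triggers, by the choice of s as the
  latest in-neighbour trigger before u.\<close>

lemma in_neighbour_last_trig_stable:
  assumes j: "j < m" "w i j > 0" and tk: "tk < t"
    and s: "s = restart m w K tt i tk t" and u: "s \<le> u" "u < t"
  shows "lt j u = lt j s"
proof (rule last_trig_cong)
  fix l assume l: "enat l < K j"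
  have "tt j l \<le> s" if "tt j l \<le> u"
  proof (cases "tt j l \<le> tk")
    case True then show ?thesis using restart_between(1)[of tk t m w K tt i] tk s by simp
  next
    case False then show ?thesis
      using in_neighbour_trigger_le_restart[of j m w i l K tk tt t, OF j l] that u s by simp
  qed
  then show "tt j l \<le> s \<longleftrightarrow> tt j l \<le> u" using u by auto
qed

lemma prediction_exact:
  assumes i: "i < m" and k: "enat k < K i" and tk: "tt i k = lt i t" "tt i k < t"
  shows "qpred m w x K tt i (tt i k) (restart m w K tt i (tt i k) t) t = q i t"
proof -
  define s where "s = restart m w K tt i (tt i k) t"
  have tk0: "0 \<le> tt i k" using trigger_nonneg[OF i k] .
  have s: "tt i k \<le> s" "s \<le> t"
    using restart_between[of "tt i k" t m w K tt i] tk(2) unfolding s_def by auto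
  have t0: "0 \<le> t" using tk0 tk(2) by simp
  show ?thesis unfolding s_def[symmetric]
  proof (rule qpred_eq_ctrl[OF i])
    have "x i t = x i (lt i t) + (t - lt i t) * q i (lt i t)"
      using state_affine_since_last_trig[OF i t0, of t] last_trig_le[OF i t0] by simp
    then show "x i (tt i k) + (t - tt i k) * q i (tt i k) = x i t" unfolding tk(1) by simp
    fix j assume j: "j < m" "j \<noteq> i" "w i j > 0"
    have s0: "0 \<le> s" using tk0 s by simp
    have a: "0 \<le> lt j s" "lt j s \<le> t"
      using last_trig_nonneg[OF j(1) s0] last_trig_le[OF j(1) s0] s by auto
    have stable: "lt j u = lt j s" if "u \<in> {lt j s..<t}" for u
    proof (cases "u \<le> s")
      case True then show ?thesis using last_trig_const[OF j(1), of s u] that by simp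
    next
      case False then show ?thesis
        using that by (intro in_neighbour_last_trig_stable[OF j(1,3) tk(2) s_def]) auto
    qed
    have "x j t = x j (lt j s) + (t - lt j s) * q j (lt j s)"
      by (rule state_affine_while_last_trig_const[OF j(1) a stable]) (use a in auto)
    then show "x j (lt j s) + (t - lt j s) * q j (lt j s) = x j t" by simp
  qed
qed

lemma ctrl_error_bound:
  assumes i: "i < m" and t: "t \<ge> 0"
  shows "\<bar>q i (lt i t) - q i t\<bar> \<le> exp (- \<beta> * t)"
proof -
  obtain k where k: "enat k < K i" "tt i k = lt i t" "ereal t < next_trig K tt i k"
    using last_trig_attained[OF i t] .
  show ?thesis
  proof (cases "tt i k = t")
    case False
    then have tkt: "tt i k < t" using k(2) last_trig_le[OF i t] by simp
    define s where "s = restart m w K tt i (tt i k) t"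
    have valid: "ereal t < horizon (\<lambda>u. \<bar>q i (tt i k) - qpred m w x K tt i (tt i k) s u\<bar>
        \<le> exp (- \<beta> * u)) s"
      using prediction_valid[OF i k(1) tkt k(3)] by (simp add: s_def tau_pred_eq_horizon)
    have "s \<le> t" using restart_between(2)[of "tt i k" t m w K tt i] tkt by (simp add: s_def)
    from less_horizon_imp[OF valid this]
    have "\<bar>q i (tt i k) - qpred m w x K tt i (tt i k) s t\<bar> \<le> exp (- \<beta> * t)" .
    then show ?thesis using prediction_exact[OF i k(1,2) tkt] k(2) by (simp add: s_def)
  qed (use k in simp)
qed

lemma state_perturbed_solution: "perturbed_solution x"
  unfolding perturbed_solution_def
proof (intro allI impI conjI)
  fix i assume i: "i < m"
  show "continuous_on {0..} (x i)" using state_continuous[OF i] .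
  fix t :: real assume t: "0 \<le> t"
  show "\<exists>e. \<bar>e\<bar> \<le> exp (- \<beta> * t) \<and>
      (x i has_real_derivative (\<Sum>j<m. w i j * (x j t - x i t)) + e) (at_right t)"
    using state_right_deriv[OF i t] ctrl_error_bound[OF i t] ctrl_eq_weighted_disagreement[OF i, of w x t]
    by (intro exI[of _ "q i (lt i t) - q i t"]) auto
qed

end

theorem theorem4:
  fixes m :: nat and w :: "nat \<Rightarrow> nat \<Rightarrow> real" and \<beta> :: real
    and x :: "nat \<Rightarrow> real \<Rightarrow> real" and K :: "nat \<Rightarrow> enat" and tt :: "nat \<Rightarrow> nat \<Rightarrow> real"
  assumes "\<And>i j. w i j \<ge> 0" and "\<And>i. w i i = 0"
    and "has_spanning_tree m w"
    and "\<beta> > 0"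
    and "system_S m w x K tt"
    and "self_triggered \<beta> m w x K tt"
  shows "(\<exists>C \<epsilon>. C > 0 \<and> \<epsilon> > 0 \<and>
            (\<forall>i<m. \<forall>j<m. \<forall>t\<ge>0. \<bar>x i t - x j t\<bar> \<le> C * exp (- \<epsilon> * t)))
       \<and> (\<forall>i<m. \<forall>B::real. finite {k. enat k < K i \<and> tt i k \<le> B})"
proof -
  interpret self_triggered_system m w \<beta> x K tt
    using assms(1,4,5,6) by unfold_locales
  show ?thesis
    using spanning_tree_exponential_consensus[OF assms(3) state_perturbed_solution]
      finitely_many_triggers by blast
qed

end
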